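(* Let $d\ge2$ be an integer. For $\lambda\in(0,1)$ let $\bar F_\lambda$ be the solution of $\bar F'(w)=\lambda\bar F(w)^d-\bar F(w)$, $\bar F(0)=\lambda$, and let $\mathbb E[W_\lambda]=\int_0^\infty\bar F_\lambda(w)^d\,dw$. Then $$\lim_{\lambda\to1^-}-\frac{\mathbb E[W_\lambda]}{\log(1-\lambda)}=\frac1{d-1}.$$
   Context: $\bar F_\lambda$ is the limiting ccdf of the workload of a queue under the LL($d$) policy (exponential job sizes of mean 1, arrival rate $\lambda$ per server), and $\mathbb E[W_\lambda]$ the corresponding mean waiting time. *)

theory Defs
  imports "HOL-Analysis.Analysis"
begin

definition LL_ccdf :: "nat \<Rightarrow> real \<Rightarrow> (real \<Rightarrow> real) \<Rightarrow> bool" where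
  "LL_ccdf d lam F \<longleftrightarrow> F 0 = lam \<and>
     (\<forall>w\<ge>0. (F has_real_derivative (lam * F w ^ d - F w)) (at w within {0..}))"

definition mean_wait :: "nat \<Rightarrow> (real \<Rightarrow> real) \<Rightarrow> real" where
  "mean_wait d F = integral {0..} (\<lambda>w. F w ^ d)"

end

theory Submission
  imports Defs "HOL-Real_Asymp.Real_Asymp"
begin

text \<open>The LL(d) equation is of Bernoulli type: with k = d - 1, the power F^k solves a
Riccati equation whose solution through F(0) = \<lambda> is explicit,
F(w)^{-k} = \<lambda> + c e^{kw} with c = \<lambda>^{-k} - \<lambda>, so F^d = (\<lambda> + c e^{kw})^{-d/k}.
This integrand stays close to \<lambda>^{-d/k} up to w_0 = log(\<lambda>/c)/k and decays like e^{-dw}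
afterwards, hence its integral is \<lambda>^{-d/k} (w_0 + O(1)). As c is of order 1 - \<lambda>,
w_0 ~ -log(1 - \<lambda>)/k.\<close>

lemma linear_ode_zero_unique:
  fixes K a :: "real \<Rightarrow> real"
  assumes a: "continuous_on {0..} a" and K0: "K 0 = 0"
    and dK: "\<And>x. x \<ge> 0 \<Longrightarrow> (K has_real_derivative a x * K x) (at x within {0..})"
    and T: "T \<ge> 0"
  shows "K T = 0"
proof -
  define A where "A x = integral {0..x} a" for x
  have dA: "(A has_real_derivative a x) (at x within {0..T})" if "x \<in> {0..T}" for x
    using integral_has_vector_derivative[OF continuous_on_subset[OF a] that]
    unfolding A_def by (simp add: has_real_derivative_iff_has_vector_derivative)
  define P where "P x = K x * exp (- A x)" for x
  have "(P has_real_derivative 0) (at x within {0..T})" if x: "x \<in> {0..T}" for x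
  proof -
    have dK': "(K has_real_derivative a x * K x) (at x within {0..T})"
      using dK[of x] x by (auto intro: has_field_derivative_subset)
    have "(P has_real_derivative a x * K x * exp (- A x) + K x * (exp (- A x) * - a x))
        (at x within {0..T})"
      unfolding P_def by (rule derivative_eq_intros dK' dA[OF x] refl | simp)+
    then show ?thesis by simp
  qed
  then obtain C where "\<forall>x\<in>{0..T}. P x = C"
    using has_field_derivative_zero_constant[of "{0..T}" P] by auto
  then have "P T = P 0" using T by auto
  then show ?thesis by (simp add: P_def K0)
qed

lemma LL_ccdf_closed_form:
  fixes k :: nat and lam w :: real and F :: "real \<Rightarrow> real"
  assumes k: "0 < k" and lam: "0 < lam" "lam < 1" and LL: "LL_ccdf (Suc k) lam F"
    and w: "w \<ge> 0"
  shows "F w > 0" and "F w ^ k * (lam + (1 / lam ^ k - lam) * exp (k * w)) = 1"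
proof -
  define c where "c = 1 / lam ^ k - lam"
  define g where "g x = lam + c * exp (k * x)" for x :: real
  define K where "K x = F x ^ k * g x - 1" for x :: real
  have dF: "(F has_real_derivative lam * F x ^ Suc k - F x) (at x within {0..})" if "x \<ge> 0" for x
    using LL that by (simp add: LL_ccdf_def)
  have contF: "continuous_on {0..} F"
    using dF by (meson atLeast_iff continuous_on_eq_continuous_within DERIV_continuous)
  have "(K has_real_derivative (k * lam * F x ^ k) * K x) (at x within {0..})" if "x \<ge> 0" for x
  proof -
    have "(K has_real_derivative k * F x ^ (k - 1) * (lam * F x ^ Suc k - F x) * g x
        + F x ^ k * (c * (exp (k * x) * k))) (at x within {0..})"
      unfolding K_def g_def by (rule derivative_eq_intros dF[OF that] refl | simp)+
    moreover have "k * F x ^ (k - 1) * (lam * F x ^ Suc k - F x) * g x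
        + F x ^ k * (c * (exp (k * x) * k)) = (k * lam * F x ^ k) * K x"
      by (cases k) (simp_all add: K_def g_def algebra_simps power2_eq_square)
    ultimately show ?thesis by simp
  qed
  moreover have "K 0 = 0"
    using LL lam by (simp add: LL_ccdf_def K_def g_def c_def field_simps)
  moreover have "continuous_on {0..} (\<lambda>x. k * lam * F x ^ k)"
    by (intro continuous_intros contF)
  ultimately have K: "K x = 0" if "x \<ge> 0" for x
    using linear_ode_zero_unique that by blast
  then show "F w ^ k * (lam + (1 / lam ^ k - lam) * exp (k * w)) = 1"
    using w by (simp add: K_def g_def c_def)
  have "F x \<noteq> 0" if "x \<ge> 0" for x
    using K[OF that] k by (auto simp: K_def zero_power)
  show "F w > 0"
  proof (rule ccontr)
    assume "\<not> F w > 0"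
    then have "F w \<le> 0" by simp
    moreover have "F 0 = lam" using LL by (simp add: LL_ccdf_def)
    moreover have "continuous_on {0..w} F" using continuous_on_subset[OF contF] by auto
    ultimately obtain t where "0 \<le> t" "F t = 0"
      using IVT2'[of F w 0 0] w lam by auto
    with \<open>\<And>x. x \<ge> 0 \<Longrightarrow> F x \<noteq> 0\<close> show False by blast
  qed
qed

lemma power_eq_powr_of_inverse_power:
  fixes x y :: real and k n :: nat
  assumes "0 < x" "0 < k" "x ^ k * y = 1"
  shows "x ^ n = y powr (- (real n / real k))"
proof -
  have "y = x powr (- real k)"
    using assms by (simp add: powr_minus powr_realpow field_simps)
  then have "y powr (- (real n / real k)) = x powr real n"
    using assms by (simp add: powr_powr)
  then show ?thesis using assms by (simp add: powr_realpow)
qed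

lemma one_minus_mult_le_powr:
  fixes x p :: real
  assumes "0 \<le> x" "0 \<le> p"
  shows "1 - p * x \<le> (1 + x) powr (- p)"
proof -
  have "1 - p * x \<le> 1 - p * ln (1 + x)"
    using assms ln_add_one_self_le_self[of x] by (simp add: mult_left_mono)
  also have "\<dots> \<le> exp (- p * ln (1 + x))" using exp_ge_add_one_self[of "- p * ln (1 + x)"] by simp
  also have "\<dots> = (1 + x) powr (- p)" using assms by (simp add: powr_def)
  finally show ?thesis .
qed

lemma powr_exp_integral_upper:
  fixes a c k p :: real
  assumes c: "0 < c" "c \<le> a" and k: "0 < k" and p: "0 < p"
  defines "f \<equiv> \<lambda>w. (a + c * exp (k * w)) powr (- p)" and "w0 \<equiv> ln (a / c) / k"
  shows "f integrable_on {0..}" and "integral {0..} f \<le> a powr (- p) * (w0 + 1 / (p * k))"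
proof -
  have w0: "0 \<le> w0" using c k by (simp add: w0_def)
  define h1 where "h1 w = (if w \<in> {0..w0} then a powr (- p) else 0)" for w
  define h2 where "h2 w = (if w \<in> {w0..} then c powr (- p) * exp (- (p * k) * w) else 0)" for w
  have "((\<lambda>w. a powr (- p)) has_integral a powr (- p) * w0) {0..w0}"
    using has_integral_const_real[of "a powr (- p)" 0 w0] w0 by (simp add: mult.commute)
  then have int_h1: "(h1 has_integral a powr (- p) * w0) {0..}"
    unfolding h1_def by (subst has_integral_restrict) auto
  moreover have "((\<lambda>w. c powr (- p) * exp (- (p * k) * w)) has_integral
      c powr (- p) * (exp (- (p * k) * w0) / (p * k))) {w0..}"
    using p k by (intro has_integral_mult_right has_integral_exp_minus_to_infinity) simp
  then have int_h2: "(h2 has_integral c powr (- p) * (exp (- (p * k) * w0) / (p * k))) {0..}"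
    unfolding h2_def using w0 by (subst has_integral_restrict) auto
  have "c powr (- p) * exp (- (p * k) * w0) = a powr (- p)"
  proof -
    have "- (p * k) * w0 = - p * ln (a / c)"
      using k by (simp add: w0_def)
    then have "exp (- (p * k) * w0) = (a / c) powr (- p)"
      using c by (simp add: powr_def)
    then show ?thesis using c by (simp add: powr_divide)
  qed
  then have int_h: "((\<lambda>w. h1 w + h2 w) has_integral a powr (- p) * (w0 + 1 / (p * k))) {0..}"
    using has_integral_add[OF int_h1 int_h2] by (simp add: algebra_simps)
  have f_le_h: "f w \<le> h1 w + h2 w" if "w \<ge> 0" for w
  proof -
    have "f w \<le> a powr (- p)" "f w \<le> (c * exp (k * w)) powr (- p)"
      unfolding f_def using p c by (auto intro!: powr_mono2')
    moreover have "(c * exp (k * w)) powr (- p) = c powr (- p) * exp (- (p * k) * w)"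
      using c by (simp add: powr_mult powr_def ln_mult algebra_simps flip: exp_add)
    moreover have "h2 w \<ge> 0" by (simp add: h2_def)
    ultimately show ?thesis
      using that by (cases "w \<le> w0") (auto simp: h1_def h2_def)
  qed
  have contf: "continuous_on {0..} f"
    unfolding f_def using c by (intro continuous_intros) (auto simp: add_pos_pos less_imp_neq[symmetric])
  have fnn: "f w \<ge> 0" for w by (simp add: f_def)
  show f_int: "f integrable_on {0..}"
    by (rule measurable_bounded_by_integrable_imp_integrable_real
        [OF continuous_imp_measurable_on_sets_lebesgue[OF contf] _ _ _])
       (use int_h f_le_h fnn in auto)
  have "integral {0..} f \<le> integral {0..} (\<lambda>w. h1 w + h2 w)"
    by (rule integral_le[OF f_int]) (use int_h f_le_h in auto)
  then show "integral {0..} f \<le> a powr (- p) * (w0 + 1 / (p * k))"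
    using int_h by (simp add: integral_unique)
qed

lemma powr_exp_integral_lower:
  fixes a c k p :: real
  assumes c: "0 < c" "c \<le> a" and k: "0 < k" and p: "0 < p"
  defines "f \<equiv> \<lambda>w. (a + c * exp (k * w)) powr (- p)" and "w0 \<equiv> ln (a / c) / k"
  shows "a powr (- p) * (w0 - p / k) \<le> integral {0..} f"
proof -
  have w0: "0 \<le> w0" using c k by (simp add: w0_def)
  have a: "0 < a" using c by simp
  define G where "G w = a powr (- p) * (w - p * (c / a) * exp (k * w) / k)" for w
  define g where "g w = (if w \<in> {0..w0} then a powr (- p) * (1 - p * (c / a) * exp (k * w)) else 0)"
    for w
  have "((\<lambda>w. a powr (- p) * (1 - p * (c / a) * exp (k * w))) has_integral G w0 - G 0) {0..w0}"
  proof (rule fundamental_theorem_of_calculus[OF w0])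
    fix x assume "x \<in> {0..w0}"
    have "(G has_real_derivative a powr (- p) * (1 - p * (c / a) * exp (k * x))) (at x within {0..w0})"
      unfolding G_def using a k by (auto intro!: derivative_eq_intros simp: field_simps)
    then show "(G has_vector_derivative a powr (- p) * (1 - p * (c / a) * exp (k * x)))
        (at x within {0..w0})"
      by (simp add: has_real_derivative_iff_has_vector_derivative)
  qed
  then have int_g: "(g has_integral G w0 - G 0) {0..}"
    unfolding g_def by (subst has_integral_restrict) auto
  have "exp (k * w0) = a / c" using c k by (simp add: w0_def)
  then have "G w0 - G 0 = a powr (- p) * (w0 - p / k + p * (c / a) / k)"
    using a c k by (simp add: G_def field_simps)
  moreover have "0 \<le> p * (c / a) / k" using p c k by simp
  ultimately have "a powr (- p) * (w0 - p / k) \<le> G w0 - G 0"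
    by (simp add: mult_left_mono)
  also have "G w0 - G 0 \<le> integral {0..} f"
  proof -
    have "g w \<le> f w" if "w \<ge> 0" for w
    proof -
      have "a + c * exp (k * w) = a * (1 + c / a * exp (k * w))" using a by (simp add: field_simps)
      then have "f w = a powr (- p) * (1 + c / a * exp (k * w)) powr (- p)"
        using a c by (simp add: f_def powr_mult)
      moreover have "1 - p * (c / a * exp (k * w)) \<le> (1 + c / a * exp (k * w)) powr (- p)"
        using a c p by (intro one_minus_mult_le_powr) auto
      ultimately show ?thesis
        by (auto simp: g_def f_def mult.assoc intro: mult_left_mono)
    qed
    then show ?thesis
      using int_g powr_exp_integral_upper(1)[OF c k p] unfolding f_def
      by (metis (no_types, lifting) atLeast_iff has_integral_le integrable_integral)
  qed
  finally show ?thesis .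
qed

lemma filterlim_neg_ln_one_minus_at_left:
  "filterlim (\<lambda>l. - ln (1 - l)) at_top (at_left (1::real))"
  by real_asymp

lemma tendsto_ln_ratio_neg_ln_one_minus:
  fixes k :: nat
  shows "((\<lambda>l::real. ln (l / (1 / l ^ k - l)) / - ln (1 - l)) \<longlongrightarrow> 1) (at_left 1)"
proof -
  define S where "S l = (\<Sum>i<Suc k. l ^ i)" for l :: real
  have "eventually (\<lambda>l. l \<in> {0<..<1}) (at_left (1::real))"
    by (rule eventually_at_left_real) simp
  then have ev: "eventually (\<lambda>l. 1 + (Suc k * ln l - ln (S l)) * (1 / - ln (1 - l))
      = ln (l / (1 / l ^ k - l)) / - ln (1 - l)) (at_left 1)"
  proof eventually_elim
    case (elim l)
    then have l: "0 < l" "l < 1" by auto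
    have "S l \<ge> 1" unfolding S_def using l by (simp add: sum.lessThan_Suc_shift sum_nonneg del: sum.lessThan_Suc)
    have "1 / l ^ k - l = (1 - l ^ Suc k) / l ^ k" using l by (simp add: field_simps)
    also have "\<dots> = (1 - l) * S l / l ^ k" unfolding S_def by (simp only: one_diff_power_eq)
    finally have "l / (1 / l ^ k - l) = l ^ Suc k / ((1 - l) * S l)"
      using l \<open>S l \<ge> 1\<close> by (simp add: field_simps)
    then have ln_eq: "ln (l / (1 / l ^ k - l)) = Suc k * ln l - ln (1 - l) - ln (S l)"
      using l \<open>S l \<ge> 1\<close> by (simp add: ln_div ln_mult ln_realpow distrib_right)
    have "ln (1 - l) \<noteq> 0" using l by simp
    then show ?case unfolding ln_eq by (simp add: field_simps)
  qed
  have lim: "((\<lambda>l. 1 + (Suc k * ln l - ln (S l)) * (1 / - ln (1 - l)))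
      \<longlongrightarrow> 1 + (Suc k * ln 1 - ln (S 1)) * 0) (at_left 1)"
    unfolding S_def
    by (intro tendsto_intros tendsto_divide_0[OF tendsto_const filterlim_neg_ln_one_minus_at_left
        [THEN filterlim_at_top_imp_at_infinity]]) auto
  from Lim_transform_eventually[OF lim ev] show ?thesis
    by simp
qed

lemma mean_wait_bounds:
  fixes k :: nat and lam :: real and F :: "real \<Rightarrow> real"
  assumes k: "0 < k" and lam: "0 < lam" "lam < 1" "1 / lam ^ k - lam \<le> lam"
    and LL: "LL_ccdf (Suc k) lam F"
  defines "p \<equiv> real (Suc k) / real k" and "w0 \<equiv> ln (lam / (1 / lam ^ k - lam)) / real k"
  shows "lam powr (- p) * (w0 - p / k) \<le> mean_wait (Suc k) F"
    and "mean_wait (Suc k) F \<le> lam powr (- p) * (w0 + 1 / Suc k)"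
proof -
  define c where "c = 1 / lam ^ k - lam"
  have "lam ^ k \<le> 1" using lam by (simp add: power_le_one)
  then have "lam * lam ^ k < 1" using lam mult_left_le[of "lam ^ k" lam] by linarith
  then have "lam < 1 / lam ^ k" using lam by (simp add: field_simps)
  then have c: "0 < c" "c \<le> lam" using lam by (auto simp: c_def)
  have "F w ^ Suc k = (lam + c * exp (k * w)) powr (- p)" if "w \<ge> 0" for w :: real
    unfolding p_def c_def
    using LL_ccdf_closed_form[OF k lam(1,2) LL that] k by (intro power_eq_powr_of_inverse_power) auto
  then have "mean_wait (Suc k) F = integral {0..} (\<lambda>w. (lam + c * exp (k * w)) powr (- p))"
    unfolding mean_wait_def by (intro integral_cong) auto
  moreover have "0 < p" "p * k = Suc k" "0 < real k" using k by (auto simp: p_def)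
  ultimately show "lam powr (- p) * (w0 - p / k) \<le> mean_wait (Suc k) F"
    and "mean_wait (Suc k) F \<le> lam powr (- p) * (w0 + 1 / Suc k)"
    using powr_exp_integral_lower[OF c \<open>0 < real k\<close> \<open>0 < p\<close>]
      powr_exp_integral_upper(2)[OF c \<open>0 < real k\<close> \<open>0 < p\<close>]
    by (simp_all add: w0_def c_def)
qed

lemma neg_mean_wait_div_ln_bounds:
  fixes k :: nat and lam :: real and F :: "real \<Rightarrow> real"
  assumes "0 < k" and lam: "0 < lam" "lam < 1" "1 / lam ^ k - lam \<le> lam"
    and "LL_ccdf (Suc k) lam F"
  defines "p \<equiv> real (Suc k) / real k" and "w0 \<equiv> ln (lam / (1 / lam ^ k - lam)) / real k"
  shows "lam powr (- p) * (w0 - p / k) / - ln (1 - lam) \<le> - mean_wait (Suc k) F / ln (1 - lam)"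
    and "- mean_wait (Suc k) F / ln (1 - lam) \<le> lam powr (- p) * (w0 + 1 / Suc k) / - ln (1 - lam)"
proof -
  have L: "0 < - ln (1 - lam)" using lam by simp
  have eq: "- mean_wait (Suc k) F / ln (1 - lam) = mean_wait (Suc k) F / - ln (1 - lam)"
    by (simp add: divide_simps)
  note bounds = mean_wait_bounds[OF assms(1-5), folded p_def w0_def]
  show "lam powr (- p) * (w0 - p / k) / - ln (1 - lam) \<le> - mean_wait (Suc k) F / ln (1 - lam)"
    and "- mean_wait (Suc k) F / ln (1 - lam) \<le> lam powr (- p) * (w0 + 1 / Suc k) / - ln (1 - lam)"
    unfolding eq by (intro divide_right_mono; use bounds L in linarith)+
qed

lemma tendsto_mean_wait_bound:
  fixes k :: nat and p C :: real
  assumes "0 < k"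
  shows "((\<lambda>l. l powr (- p) * (ln (l / (1 / l ^ k - l)) / k + C) / - ln (1 - l)) \<longlongrightarrow> 1 / k)
    (at_left 1)"
proof -
  have "((\<lambda>l. l powr (- p) * (ln (l / (1 / l ^ k - l)) / - ln (1 - l) / k + C / - ln (1 - l)))
      \<longlongrightarrow> 1 powr (- p) * (1 / k + 0)) (at_left 1)"
    by (intro tendsto_intros tendsto_ln_ratio_neg_ln_one_minus tendsto_divide_0[OF tendsto_const
        filterlim_neg_ln_one_minus_at_left[THEN filterlim_at_top_imp_at_infinity]]) (use assms in auto)
  then show ?thesis by (simp add: add_divide_distrib algebra_simps)
qed

lemma eventually_inverse_power_minus_le:
  fixes k :: nat
  shows "eventually (\<lambda>l. 0 < l \<and> l < 1 \<and> 1 / l ^ k - l \<le> l) (at_left (1::real))"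
proof -
  have "((\<lambda>l. 1 / l ^ k - l) \<longlongrightarrow> 1 / 1 ^ k - 1) (at_left (1::real))"
    by (intro tendsto_intros) auto
  then have "eventually (\<lambda>l. 1 / l ^ k - l < 1 / 2) (at_left (1::real))"
    by (intro order_tendstoD) auto
  moreover have "eventually (\<lambda>l. l \<in> {1 / 2<..<1}) (at_left (1::real))"
    by (rule eventually_at_left_real) simp
  ultimately show ?thesis by eventually_elim auto
qed

theorem corollary2p3:
  fixes d :: nat and F :: "real \<Rightarrow> real \<Rightarrow> real"
  assumes "d \<ge> 2"
    and "\<And>lam. 0 < lam \<Longrightarrow> lam < 1 \<Longrightarrow> LL_ccdf d lam (F lam)"
  shows "((\<lambda>lam. - mean_wait d (F lam) / ln (1 - lam)) \<longlongrightarrow> 1 / (real d - 1)) (at_left 1)"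
proof -
  obtain k where d: "d = Suc k" and k: "0 < k" using assms(1) by (cases d) auto
  define p where "p = real (Suc k) / real k"
  note bounds = neg_mean_wait_div_ln_bounds[OF k _ _ _ assms(2)[unfolded d], folded p_def]
  have lower: "eventually (\<lambda>l. l powr (- p) * (ln (l / (1 / l ^ k - l)) / k - p / k) / - ln (1 - l)
      \<le> - mean_wait d (F l) / ln (1 - l)) (at_left 1)"
    using eventually_inverse_power_minus_le[of k] by eventually_elim (unfold d, intro bounds, auto)
  have upper: "eventually (\<lambda>l. - mean_wait d (F l) / ln (1 - l)
      \<le> l powr (- p) * (ln (l / (1 / l ^ k - l)) / k + 1 / Suc k) / - ln (1 - l)) (at_left 1)"
    using eventually_inverse_power_minus_le[of k] by eventually_elim (unfold d, intro bounds, auto)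
  have "((\<lambda>l. l powr (- p) * (ln (l / (1 / l ^ k - l)) / k - p / k) / - ln (1 - l))
      \<longlongrightarrow> 1 / k) (at_left 1)"
    using tendsto_mean_wait_bound[OF k, of p "- p / k"] by simp
  from tendsto_sandwich[OF lower upper this tendsto_mean_wait_bound[OF k]] show ?thesis
    by (simp add: d)
qed

end
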